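(* Let $a,b,k\in\mathbb{N}$ with $k\le\min(a,b)$ and $P=[a]\times[b]$ with the product order. Then $(\mathcal{A}_k(P),\le_k)\cong\mathcal{C}(a,k)\times\mathcal{C}(b,k)$ as posets.
   Context: $[n]=\{1,\dots,n\}$. For a finite poset $P$, $\mathcal{A}_k(P)$ is the set of antichains of $P$ of size $k$; for $A,B\in\mathcal{A}_k(P)$, $A\prec_k B$ means $A\setminus B=\{a\}$, $B\setminus A=\{b\}$ are singletons with $a<_P b$, and $\le_k$ is the reflexive transitive closure of $\prec_k$. For $k\le n$, $\mathcal{C}(n,k)$ is the set of $k$-element subsets of $[n]$ written as increasing sequences $(x_1<\dots<x_k)$, with $\mathbf{x}\le\mathbf{y}$ iff $x_i\le y_i$ for all $i$; products carry the product order. *)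

theory Defs
  imports Main
begin

definition antichains :: "'a set \<Rightarrow> ('a \<Rightarrow> 'a \<Rightarrow> bool) \<Rightarrow> nat \<Rightarrow> 'a set set" where
  "antichains X le k = {A. A \<subseteq> X \<and> finite A \<and> card A = k \<and>
      (\<forall>x\<in>A. \<forall>y\<in>A. le x y \<longrightarrow> x = y)}"

definition antichain_step :: "'a set \<Rightarrow> ('a \<Rightarrow> 'a \<Rightarrow> bool) \<Rightarrow> nat \<Rightarrow> 'a set \<Rightarrow> 'a set \<Rightarrow> bool" where
  "antichain_step X le k A B \<longleftrightarrow> A \<in> antichains X le k \<and> B \<in> antichains X le k \<and>
      (\<exists>a b. A - B = {a} \<and> B - A = {b} \<and> le a b \<and> a \<noteq> b)"

definition antichain_le :: "'a set \<Rightarrow> ('a \<Rightarrow> 'a \<Rightarrow> bool) \<Rightarrow> nat \<Rightarrow> 'a set \<Rightarrow> 'a set \<Rightarrow> bool" where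
  "antichain_le X le k = (antichain_step X le k)\<^sup>*\<^sup>*"

definition grid :: "nat \<Rightarrow> nat \<Rightarrow> (nat \<times> nat) set" where
  "grid a b = {1..a} \<times> {1..b}"

definition grid_le :: "nat \<times> nat \<Rightarrow> nat \<times> nat \<Rightarrow> bool" where
  "grid_le p q \<longleftrightarrow> fst p \<le> fst q \<and> snd p \<le> snd q"

text \<open>C(n,k): k-subsets of [n] as strictly increasing sequences, componentwise order.\<close>
definition kchains :: "nat \<Rightarrow> nat \<Rightarrow> nat list set" where
  "kchains n k = {xs. length xs = k \<and> sorted_wrt (<) xs \<and> set xs \<subseteq> {1..n}}"

definition chain_le :: "nat list \<Rightarrow> nat list \<Rightarrow> bool" where
  "chain_le xs ys \<longleftrightarrow> length xs = length ys \<and> (\<forall>i<length xs. xs ! i \<le> ys ! i)"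

definition prod_le :: "('a \<Rightarrow> 'a \<Rightarrow> bool) \<Rightarrow> ('b \<Rightarrow> 'b \<Rightarrow> bool) \<Rightarrow> 'a \<times> 'b \<Rightarrow> 'a \<times> 'b \<Rightarrow> bool" where
  "prod_le r s p q \<longleftrightarrow> r (fst p) (fst q) \<and> s (snd p) (snd q)"

definition order_iso :: "'a set \<Rightarrow> ('a \<Rightarrow> 'a \<Rightarrow> bool) \<Rightarrow> 'b set \<Rightarrow> ('b \<Rightarrow> 'b \<Rightarrow> bool) \<Rightarrow> bool" where
  "order_iso X leX Y leY \<longleftrightarrow> (\<exists>f. bij_betw f X Y \<and>
      (\<forall>x\<in>X. \<forall>y\<in>X. leX x y \<longleftrightarrow> leY (f x) (f y)))"

end

theory Submission
  imports Defs "HOL-Library.Product_Lexorder"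
begin

(*
  Listed by increasing first coordinate, an antichain of size k in [a] x [b] has strictly
  decreasing second coordinates. Hence it is determined by its two projections, which are
  arbitrary k-subsets of [a] and of [b], and it is recovered by zipping the first projection
  with the reversed second one.
  A covering step moves one point of the antichain upwards; this replaces one element of each
  projection by a larger one, which can only increase the sorted projections componentwise.
  Conversely, a componentwise increase of one sorted projection can be performed by raising a
  single entry by 1 at a time, always the last entry that still has to grow, so that the list
  stays strictly increasing; each such move is a covering step of the antichains.
*)

lemma chain_le_eq_list_all2: "chain_le = list_all2 (\<le>)"
  by (auto simp: fun_eq_iff chain_le_def list_all2_conv_all_nth)

lemma chain_le_trans: "chain_le xs ys \<Longrightarrow> chain_le ys zs \<Longrightarrow> chain_le xs zs"
  unfolding chain_le_eq_list_all2 by (rule list_all2_trans[OF order_trans])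

lemma rtranclp_map:
  assumes "\<And>x y. r x y \<Longrightarrow> s (f x) (f y)" "r\<^sup>*\<^sup>* x y"
  shows "s\<^sup>*\<^sup>* (f x) (f y)"
  using assms(2) by (induction rule: rtranclp_induct) (auto dest: assms(1))

lemma sorted_wrt_less_nth_less_iff:
  fixes xs :: "'a::linorder list"
  assumes "sorted_wrt (<) xs" "i < length xs" "j < length xs"
  shows "xs!i < xs!j \<longleftrightarrow> i < j"
  using sorted_wrt_nth_less[OF assms(1)] assms(2,3)
  by (cases i j rule: linorder_cases) (auto dest: order_less_asym)

lemma sorted_list_of_set_set_strict:
  "sorted_wrt (<) xs \<Longrightarrow> sorted_list_of_set (set xs) = xs"
  by (simp add: sorted_list_of_set_sort_remdups strict_sorted_iff distinct_remdups_id sorted_sort_id)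

lemma list_all2_le_sorted_list_of_set:
  fixes \<phi> :: "'a::linorder \<Rightarrow> 'a"
  assumes "finite T" "inj_on \<phi> T" "\<phi> ` T = S" "\<And>y. y \<in> T \<Longrightarrow> \<phi> y \<le> y"
  shows "list_all2 (\<le>) (sorted_list_of_set S) (sorted_list_of_set T)"
proof -
  define xs ys where "xs = sorted_list_of_set S" and "ys = sorted_list_of_set T"
  have S: "finite S" "card S = card T" using assms by (auto simp: card_image)
  have xs: "sorted_wrt (<) xs" "set xs = S" "length xs = card T"
    using S by (simp_all add: xs_def)
  have ys: "sorted_wrt (<) ys" "set ys = T" "length ys = card T"
    using assms(1) by (simp_all add: ys_def)
  have "xs!i \<le> ys!i" if i: "i < card T" for i
  proof (rule ccontr)
    \<comment> \<open>otherwise \<phi> maps the i+1 smallest elements of T injectively below the i-th element of S\<close>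
    assume "\<not> xs!i \<le> ys!i"
    have "\<phi> (ys!j) \<in> (!) xs ` {..<i}" if "j \<le> i" for j
    proof -
      have "ys!j \<le> ys!i"
        using sorted_wrt_less_nth_less_iff[OF ys(1), of j i] \<open>j \<le> i\<close> i ys(3)
        by (cases "j = i") auto
      moreover have "\<phi> (ys!j) \<le> ys!j"
        using assms(4) \<open>j \<le> i\<close> i ys by auto
      ultimately have "\<phi> (ys!j) \<le> ys!i"
        by (rule order_trans[rotated])
      moreover have "\<phi> (ys!j) \<in> set xs"
        using assms(3) \<open>j \<le> i\<close> i xs ys by auto
      ultimately obtain l where "l < card T" "xs!l < xs!i" "\<phi> (ys!j) = xs!l"
        using \<open>\<not> xs!i \<le> ys!i\<close> xs(3) by (auto simp: in_set_conv_nth)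
      then show ?thesis
        using sorted_wrt_less_nth_less_iff[OF xs(1)] i xs(3) by auto
    qed
    then have "(\<phi> \<circ> (!) ys) ` {..i} \<subseteq> (!) xs ` {..<i}"
      by auto
    moreover have "inj_on (\<phi> \<circ> (!) ys) {..i}"
    proof (rule comp_inj_on)
      show "inj_on ((!) ys) {..i}"
        using i ys by (intro inj_on_nth) (auto simp: strict_sorted_iff)
      show "inj_on \<phi> ((!) ys ` {..i})"
        by (rule inj_on_subset[OF assms(2)]) (use i ys in auto)
    qed
    ultimately have "card {..i} \<le> card {..<i}"
      by (metis card_image card_image_le card_mono finite_imageI finite_lessThan le_trans)
    then show False
      by simp
  qed
  then show ?thesis
    using xs ys by (simp add: list_all2_conv_all_nth xs_def ys_def)
qed

lemma list_all2_le_sorted_list_of_set_replace: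
  fixes S :: "'a::linorder set"
  assumes "finite S" "u \<in> S" "v \<notin> S - {u}" "u \<le> v"
  shows "list_all2 (\<le>) (sorted_list_of_set S) (sorted_list_of_set (insert v (S - {u})))"
proof (rule list_all2_le_sorted_list_of_set)
  show "inj_on (\<lambda>y. if y = v then u else y) (insert v (S - {u}))"
    using assms(3) by (auto simp: inj_on_def)
  show "(\<lambda>y. if y = v then u else y) ` insert v (S - {u}) = S"
    using assms(2,3) by auto
qed (use assms in auto)

lemma list_all2_le_sorted_list_of_set_image_step:
  fixes \<pi> :: "'a \<Rightarrow> 'b::linorder"
  assumes "finite A" "inj_on \<pi> A" "inj_on \<pi> B" "A - B = {p}" "B - A = {q}" "\<pi> p \<le> \<pi> q"
  shows "list_all2 (\<le>) (sorted_list_of_set (\<pi> ` A)) (sorted_list_of_set (\<pi> ` B))"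
proof -
  have B: "B = insert q (A - {p})" "p \<in> A" "q \<notin> A" "q \<in> B"
    using assms(4,5) by blast+
  have "\<pi> ` (A - {p}) = \<pi> ` A - {\<pi> p}"
    using assms(2) B(2) by (auto simp: inj_on_def)
  then have image: "\<pi> ` B = insert (\<pi> q) (\<pi> ` A - {\<pi> p})"
    using B(1) by simp
  have "\<pi> q \<notin> \<pi> ` A - {\<pi> p}"
  proof
    assume "\<pi> q \<in> \<pi> ` A - {\<pi> p}"
    then obtain r where r: "r \<in> A" "r \<noteq> p" "\<pi> r = \<pi> q"
      by (metis DiffE imageE singletonI)
    then have "r = q"
      using inj_onD[OF assms(3)] B by auto
    then show False
      using r(1) B(3) by simp
  qed
  with assms(1,6) B(2) show ?thesis
    unfolding image by (intro list_all2_le_sorted_list_of_set_replace) simp_all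
qed

lemma antichainsD:
  assumes "A \<in> antichains X le k" "p \<in> A" "q \<in> A" "le p q"
  shows "p = q"
  using assms by (simp add: antichains_def)

lemma antichain_step_list_update:
  assumes "distinct zs" "i < length zs"
    and "set zs \<in> antichains X le k" "set (zs[i := p]) \<in> antichains X le k"
    and "le (zs!i) p" "zs!i \<noteq> p"
  shows "antichain_step X le k (set zs) (set (zs[i := p]))"
proof -
  have "p \<notin> set zs"
    using antichainsD[OF assms(3) nth_mem[OF assms(2)] _ assms(5)] assms(6) by blast
  then have "set zs - set (zs[i := p]) = {zs!i}" "set (zs[i := p]) - set zs = {p}"
    using set_update_distinct[OF assms(1,2)] nth_mem[OF assms(2)] assms(6) by auto
  then show ?thesis
    using assms(3-6) by (auto simp: antichain_step_def)
qed

lemma antichain_inj_on_fst: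
  assumes "A \<in> antichains X grid_le k"
  shows "inj_on fst A"
  by (rule inj_onI) (metis antichainsD[OF assms] grid_le_def nat_le_linear order_refl)

lemma antichain_inj_on_snd:
  assumes "A \<in> antichains X grid_le k"
  shows "inj_on snd A"
  by (rule inj_onI) (metis antichainsD[OF assms] grid_le_def nat_le_linear order_refl)

text \<open>Pairs are sorted lexicographically (Product_Lexorder); on an antichain of the grid this is
  the order by increasing first and decreasing second coordinate.\<close>

lemma antichain_sorted_list_of_set:
  assumes "A \<in> antichains X grid_le k"
  shows "sorted_wrt (<) (map fst (sorted_list_of_set A))"
    and "sorted_wrt (>) (map snd (sorted_list_of_set A))"
proof -
  have fin: "finite A" using assms by (simp add: antichains_def)
  have key: "fst p < fst q \<and> snd q < snd p" if "p \<in> A" "q \<in> A" "p < q" for p q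
    using antichainsD[OF assms that(1,2)] that(3)
    by (auto simp: less_prod_def' grid_le_def not_le[symmetric])
  have sorted: "sorted_wrt (<) (sorted_list_of_set A)"
    by simp
  show "sorted_wrt (<) (map fst (sorted_list_of_set A))"
    unfolding sorted_wrt_map by (rule sorted_wrt_mono_rel[OF _ sorted]) (use key fin in simp)
  show "sorted_wrt (>) (map snd (sorted_list_of_set A))"
    unfolding sorted_wrt_map by (rule sorted_wrt_mono_rel[OF _ sorted]) (use key fin in simp)
qed

definition antichain_of_chains :: "nat list \<times> nat list \<Rightarrow> (nat \<times> nat) set" where
  "antichain_of_chains p = set (zip (fst p) (rev (snd p)))"

definition chains_of_antichain :: "(nat \<times> nat) set \<Rightarrow> nat list \<times> nat list" where
  "chains_of_antichain A = (sorted_list_of_set (fst ` A), sorted_list_of_set (snd ` A))"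

lemma chains_of_antichain_eq:
  assumes "A \<in> antichains X grid_le k"
  shows "chains_of_antichain A =
    (map fst (sorted_list_of_set A), rev (map snd (sorted_list_of_set A)))"
proof -
  define zs where "zs = sorted_list_of_set A"
  have "A = set zs"
    using assms by (simp add: zs_def antichains_def)
  then have images: "fst ` A = set (map fst zs)" "snd ` A = set (rev (map snd zs))"
    by simp_all
  have sorted: "sorted_wrt (<) (map fst zs)" "sorted_wrt (<) (rev (map snd zs))"
    using antichain_sorted_list_of_set[OF assms] by (simp_all add: zs_def sorted_wrt_rev)
  have "chains_of_antichain A =
      (sorted_list_of_set (set (map fst zs)), sorted_list_of_set (set (rev (map snd zs))))"
    unfolding chains_of_antichain_def images ..
  also have "\<dots> = (map fst zs, rev (map snd zs))"
    using sorted by (simp only: sorted_list_of_set_set_strict)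
  finally show ?thesis
    by (simp only: zs_def)
qed

lemma chains_of_antichain_in_kchains:
  assumes "A \<in> antichains (grid a b) grid_le k"
  shows "chains_of_antichain A \<in> kchains a k \<times> kchains b k"
proof -
  define zs where "zs = sorted_list_of_set A"
  have "length zs = k" "set zs \<subseteq> {1..a} \<times> {1..b}"
    using assms by (auto simp: zs_def antichains_def grid_def)
  moreover have "sorted_wrt (<) (map fst zs)" "sorted_wrt (<) (rev (map snd zs))"
    using antichain_sorted_list_of_set[OF assms] by (simp_all add: zs_def sorted_wrt_rev)
  ultimately show ?thesis
    unfolding chains_of_antichain_eq[OF assms] zs_def[symmetric] by (auto simp: kchains_def)
qed

lemma antichain_of_chains_of_antichain:
  assumes "A \<in> antichains X grid_le k"
  shows "antichain_of_chains (chains_of_antichain A) = A"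
  using assms unfolding chains_of_antichain_eq[OF assms]
  by (simp add: antichain_of_chains_def zip_map_fst_snd antichains_def)

lemma antichain_of_chains_in_antichains:
  assumes "xs \<in> kchains a k" "ys \<in> kchains b k"
  shows "antichain_of_chains (xs, ys) \<in> antichains (grid a b) grid_le k"
proof -
  define zs where "zs = zip xs (rev ys)"
  have len: "length xs = k" "length (rev ys) = k" "length zs = k"
    using assms by (simp_all add: kchains_def zs_def)
  have sorted: "sorted_wrt (<) xs" "sorted_wrt (>) (rev ys)"
    using assms by (simp_all add: kchains_def sorted_wrt_rev)
  have "distinct zs"
    using sorted(1) by (simp add: zs_def distinct_zipI1 strict_sorted_iff)
  moreover have "set zs \<subseteq> grid a b"
  proof
    fix p assume "p \<in> set zs"
    then have "fst p \<in> set xs" "snd p \<in> set (rev ys)"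
      unfolding zs_def by (metis prod.collapse set_zip_leftD set_zip_rightD)+
    then show "p \<in> grid a b"
      using assms by (auto simp: kchains_def grid_def mem_Times_iff)
  qed
  moreover have "p = q" if pq: "p \<in> set zs" "q \<in> set zs" and le: "grid_le p q" for p q
  proof -
    obtain i j where ij: "i < k" "j < k" "p = (xs!i, rev ys!i)" "q = (xs!j, rev ys!j)"
      using pq len by (auto simp: in_set_conv_nth zs_def)
    then have "xs!i \<le> xs!j" "rev ys!i \<le> rev ys!j"
      using le by (simp_all add: grid_le_def)
    then have "i = j"
      using sorted_wrt_nth_less[OF sorted(1), of i j] sorted_wrt_nth_less[OF sorted(1), of j i]
        sorted_wrt_nth_less[OF sorted(2), of i j] ij len
      by (cases i j rule: linorder_cases) auto
    then show "p = q"
      using ij by simp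
  qed
  ultimately show ?thesis
    using len by (simp add: antichains_def antichain_of_chains_def zs_def distinct_card)
qed

lemma chains_of_antichain_of_chains:
  assumes "xs \<in> kchains a k" "ys \<in> kchains b k"
  shows "chains_of_antichain (antichain_of_chains (xs, ys)) = (xs, ys)"
proof -
  have "map fst (zip xs (rev ys)) = xs" "map snd (zip xs (rev ys)) = rev ys"
    using assms by (simp_all add: kchains_def)
  then have "fst ` antichain_of_chains (xs, ys) = set xs"
    and "snd ` antichain_of_chains (xs, ys) = set ys"
    unfolding antichain_of_chains_def by (metis set_map fst_conv snd_conv set_rev)+
  then show ?thesis
    using assms by (simp add: chains_of_antichain_def kchains_def sorted_list_of_set_set_strict)
qed

lemma bij_betw_chains_of_antichain:
  "bij_betw chains_of_antichain (antichains (grid a b) grid_le k) (kchains a k \<times> kchains b k)"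
proof (rule bij_betw_byWitness[where f' = antichain_of_chains])
  show "\<forall>A\<in>antichains (grid a b) grid_le k. antichain_of_chains (chains_of_antichain A) = A"
    using antichain_of_chains_of_antichain by blast
  show "\<forall>p\<in>kchains a k \<times> kchains b k. chains_of_antichain (antichain_of_chains p) = p"
    using chains_of_antichain_of_chains by fastforce
  show "chains_of_antichain ` antichains (grid a b) grid_le k \<subseteq> kchains a k \<times> kchains b k"
    using chains_of_antichain_in_kchains by blast
  show "antichain_of_chains ` (kchains a k \<times> kchains b k) \<subseteq> antichains (grid a b) grid_le k"
    using antichain_of_chains_in_antichains by fastforce
qed

lemma chains_of_antichain_mono_step:
  assumes "antichain_step X grid_le k A B"
  shows "prod_le chain_le chain_le (chains_of_antichain A) (chains_of_antichain B)"
proof -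
  obtain p q where AB: "A \<in> antichains X grid_le k" "B \<in> antichains X grid_le k"
    "A - B = {p}" "B - A = {q}" "grid_le p q"
    using assms by (auto simp: antichain_step_def)
  have "finite A"
    using AB(1) by (simp add: antichains_def)
  show ?thesis
    using list_all2_le_sorted_list_of_set_image_step[OF \<open>finite A\<close>
        antichain_inj_on_fst[OF AB(1)] antichain_inj_on_fst[OF AB(2)] AB(3,4)]
      list_all2_le_sorted_list_of_set_image_step[OF \<open>finite A\<close>
        antichain_inj_on_snd[OF AB(1)] antichain_inj_on_snd[OF AB(2)] AB(3,4)]
      AB(5)
    \<comment> \<open>the qualifier is needed: Product_Lexorder exports a fact of the same name\<close>
    by (simp add: Defs.prod_le_def chains_of_antichain_def chain_le_eq_list_all2 grid_le_def)
qed

lemma chains_of_antichain_mono: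
  assumes "antichain_le X grid_le k A B"
  shows "prod_le chain_le chain_le (chains_of_antichain A) (chains_of_antichain B)"
  using assms unfolding antichain_le_def
proof (induction rule: rtranclp_induct)
  case base
  then show ?case
    by (simp add: Defs.prod_le_def chain_le_def)
next
  case (step B C)
  then show ?case
    using chains_of_antichain_mono_step[OF step(2)] chain_le_trans
    by (auto simp: Defs.prod_le_def)
qed

lemma sorted_wrt_less_list_update_Suc:
  fixes xs :: "nat list"
  assumes "sorted_wrt (<) xs" "i < length xs" "Suc i < length xs \<Longrightarrow> Suc (xs!i) < xs!(Suc i)"
  shows "sorted_wrt (<) (xs[i := Suc (xs!i)])"
proof -
  have "xs[i := Suc (xs!i)] ! j < xs[i := Suc (xs!i)] ! Suc j" if "Suc j < length xs" for j
    using sorted_wrt_nth_less[OF assms(1), of j "Suc j"] assms(2,3) that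
    by (auto simp: nth_list_update)
  then show ?thesis
    by (simp add: sorted_wrt_iff_nth_Suc_transp)
qed

lemma chain_le_last_gap:
  assumes "chain_le xs ys" "xs \<noteq> ys"
  obtains i where "i < length xs" "xs!i < ys!i"
    and "\<And>j. i < j \<Longrightarrow> j < length xs \<Longrightarrow> xs!j = ys!j"
proof -
  define D where "D = {j. j < length xs \<and> xs!j \<noteq> ys!j}"
  have "D \<noteq> {}"
    using assms nth_equalityI[of xs ys] by (auto simp: D_def chain_le_def)
  then have "Max D \<in> D"
    by (rule Max_in[rotated]) (simp add: D_def)
  then have max: "Max D < length xs" "xs!(Max D) \<noteq> ys!(Max D)"
    by (simp_all add: D_def)
  moreover have "xs!(Max D) \<le> ys!(Max D)"
    using assms(1) max(1) by (simp add: chain_le_def)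
  moreover have "xs!j = ys!j" if "Max D < j" "j < length xs" for j
  proof (rule ccontr)
    assume "xs!j \<noteq> ys!j"
    then have "j \<in> D"
      using that(2) by (simp add: D_def)
    then have "j \<le> Max D"
      by (rule Max_ge[rotated]) (simp add: D_def)
    then show False
      using that(1) by simp
  qed
  ultimately show ?thesis
    using that[of "Max D"] by simp
qed

lemma kchains_bump_exists:
  assumes xs: "xs \<in> kchains n k" and ys: "ys \<in> kchains n k"
    and "chain_le xs ys" "xs \<noteq> ys"
  obtains i where "i < k" "xs!i < ys!i" "xs[i := Suc (xs!i)] \<in> kchains n k"
proof -
  have len: "length xs = k" "length ys = k"
    using xs ys by (simp_all add: kchains_def)
  obtain i where i: "i < k" "xs!i < ys!i"
    and above: "\<And>j. i < j \<Longrightarrow> j < k \<Longrightarrow> xs!j = ys!j"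
    using chain_le_last_gap[OF assms(3,4)] len(1) by metis
  have "sorted_wrt (<) (xs[i := Suc (xs!i)])"
  proof (rule sorted_wrt_less_list_update_Suc)
    show "sorted_wrt (<) xs" "i < length xs"
      using xs i len by (simp_all add: kchains_def)
    assume "Suc i < length xs"
    then have "ys!i < ys!(Suc i)" "xs!(Suc i) = ys!(Suc i)"
      using ys above[of "Suc i"] len by (simp_all add: kchains_def sorted_wrt_nth_less)
    then show "Suc (xs!i) < xs!(Suc i)"
      using i by simp
  qed
  moreover have "set (xs[i := Suc (xs!i)]) \<subseteq> {1..n}"
  proof -
    have "ys!i \<in> set ys"
      using i len by simp
    then have "ys!i \<in> {1..n}"
      using ys unfolding kchains_def by blast
    moreover have "set (xs[i := Suc (xs!i)]) \<subseteq> insert (Suc (xs!i)) (set xs)"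
      by (rule set_update_subset_insert)
    ultimately show ?thesis
      using xs i by (auto simp: kchains_def)
  qed
  ultimately show ?thesis
    using that i len by (simp add: kchains_def)
qed

definition chain_bump :: "nat \<Rightarrow> nat \<Rightarrow> nat list \<Rightarrow> nat list \<Rightarrow> bool" where
  "chain_bump n k xs ys \<longleftrightarrow>
    xs \<in> kchains n k \<and> ys \<in> kchains n k \<and> (\<exists>i<k. ys = xs[i := Suc (xs!i)])"

lemma rtranclp_chain_bump_if_chain_le:
  assumes "xs \<in> kchains n k" "ys \<in> kchains n k" "chain_le xs ys"
  shows "(chain_bump n k)\<^sup>*\<^sup>* xs ys"
  using assms
proof (induction "\<Sum>j<k. ys!j - xs!j" arbitrary: xs rule: less_induct)
  case less
  show ?case
  proof (cases "xs = ys")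
    case True
    then show ?thesis by simp
  next
    case False
    then obtain i where i: "i < k" "xs!i < ys!i"
      and bumped: "xs[i := Suc (xs!i)] \<in> kchains n k"
      using kchains_bump_exists[OF less.prems] by blast
    define xs' where "xs' = xs[i := Suc (xs!i)]"
    have nth': "xs'!j = (if j = i then Suc (xs!i) else xs!j)" for j
      using i less.prems(1) by (simp add: xs'_def kchains_def)
    have "chain_le xs' ys"
      using less.prems(3) i nth' by (auto simp: chain_le_def xs'_def)
    moreover have "(\<Sum>j<k. ys!j - xs'!j) < (\<Sum>j<k. ys!j - xs!j)"
      by (rule sum_strict_mono_ex1) (use i nth' in auto)
    ultimately have "(chain_bump n k)\<^sup>*\<^sup>* xs' ys"
      using less.hyps bumped less.prems(2) by (simp add: xs'_def)
    moreover have "chain_bump n k xs xs'"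
      using less.prems(1) bumped i by (auto simp: chain_bump_def xs'_def)
    ultimately show ?thesis
      by (simp add: converse_rtranclp_into_rtranclp)
  qed
qed

lemma antichain_step_bump_fst:
  assumes "chain_bump a k xs xs'" "ys \<in> kchains b k"
  shows "antichain_step (grid a b) grid_le k
    (antichain_of_chains (xs, ys)) (antichain_of_chains (xs', ys))"
proof -
  obtain i where i: "i < k" "xs' = xs[i := Suc (xs!i)]"
    and xs: "xs \<in> kchains a k" "xs' \<in> kchains a k"
    using assms(1) by (auto simp: chain_bump_def)
  have len: "length xs = k" "length (rev ys) = k"
    using xs assms(2) by (simp_all add: kchains_def)
  define zs where "zs = zip xs (rev ys)"
  have "zip xs' (rev ys) = zs[i := (Suc (xs!i), rev ys!i)]"
    unfolding zs_def i(2) by (metis list_update_id zip_update)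
  moreover have "zs!i = (xs!i, rev ys!i)"
    using i len by (simp add: zs_def)
  moreover have "distinct zs"
    using xs by (simp add: zs_def distinct_zipI1 kchains_def strict_sorted_iff)
  ultimately show ?thesis
    using antichain_step_list_update[of zs i "grid a b" grid_le k]
      antichain_of_chains_in_antichains[OF xs(1) assms(2)]
      antichain_of_chains_in_antichains[OF xs(2) assms(2)] i len
    by (simp add: antichain_of_chains_def zs_def grid_le_def)
qed

lemma antichain_step_bump_snd:
  assumes "xs \<in> kchains a k" "chain_bump b k ys ys'"
  shows "antichain_step (grid a b) grid_le k
    (antichain_of_chains (xs, ys)) (antichain_of_chains (xs, ys'))"
proof -
  obtain i where i: "i < k" "ys' = ys[i := Suc (ys!i)]"
    and ys: "ys \<in> kchains b k" "ys' \<in> kchains b k"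
    using assms(2) by (auto simp: chain_bump_def)
  have len: "length xs = k" "length ys = k"
    using ys assms(1) by (simp_all add: kchains_def)
  define j where "j = k - i - 1"
  have j: "j < k" "rev ys!j = ys!i"
    using i len by (auto simp: j_def rev_nth)
  define zs where "zs = zip xs (rev ys)"
  have "rev ys' = (rev ys)[j := Suc (ys!i)]"
    using i len by (simp add: rev_update j_def)
  then have "zip xs (rev ys') = zs[j := (xs!j, Suc (ys!i))]"
    unfolding zs_def by (metis list_update_id zip_update)
  moreover have "zs!j = (xs!j, ys!i)"
    using j len by (simp add: zs_def)
  moreover have "distinct zs"
    using assms(1) by (simp add: zs_def distinct_zipI1 kchains_def strict_sorted_iff)
  ultimately show ?thesis
    using antichain_step_list_update[of zs j "grid a b" grid_le k]
      antichain_of_chains_in_antichains[OF assms(1) ys(1)]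
      antichain_of_chains_in_antichains[OF assms(1) ys(2)] j len
    by (simp add: antichain_of_chains_def zs_def grid_le_def)
qed

lemma antichain_le_of_chains:
  assumes "p \<in> kchains a k \<times> kchains b k" "q \<in> kchains a k \<times> kchains b k"
    and "prod_le chain_le chain_le p q"
  shows "antichain_le (grid a b) grid_le k (antichain_of_chains p) (antichain_of_chains q)"
proof -
  obtain xs ys xs' ys' where pq: "p = (xs, ys)" "q = (xs', ys')"
    by fastforce
  have chains: "xs \<in> kchains a k" "xs' \<in> kchains a k" "ys \<in> kchains b k" "ys' \<in> kchains b k"
    and le: "chain_le xs xs'" "chain_le ys ys'"
    using assms pq by (auto simp: Defs.prod_le_def)
  have "antichain_le (grid a b) grid_le k
      (antichain_of_chains (xs, ys)) (antichain_of_chains (xs', ys))"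
    unfolding antichain_le_def
    using rtranclp_map[where f = "\<lambda>u. antichain_of_chains (u, ys)"]
      antichain_step_bump_fst[OF _ chains(3)] rtranclp_chain_bump_if_chain_le[OF chains(1,2) le(1)]
    by blast
  moreover have "antichain_le (grid a b) grid_le k
      (antichain_of_chains (xs', ys)) (antichain_of_chains (xs', ys'))"
    unfolding antichain_le_def
    using rtranclp_map[where f = "\<lambda>v. antichain_of_chains (xs', v)"]
      antichain_step_bump_snd[OF chains(2)] rtranclp_chain_bump_if_chain_le[OF chains(3,4) le(2)]
    by blast
  ultimately show ?thesis
    unfolding antichain_le_def pq by (rule rtranclp_trans)
qed

theorem proposition3p1:
  fixes a b k :: nat
  assumes "k \<le> min a b"
  shows "order_iso (antichains (grid a b) grid_le k) (antichain_le (grid a b) grid_le k)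
           (kchains a k \<times> kchains b k) (prod_le chain_le chain_le)"
  unfolding order_iso_def
proof (intro exI conjI ballI)
  show "bij_betw chains_of_antichain
      (antichains (grid a b) grid_le k) (kchains a k \<times> kchains b k)"
    by (rule bij_betw_chains_of_antichain)
  fix A B
  assume A: "A \<in> antichains (grid a b) grid_le k" and B: "B \<in> antichains (grid a b) grid_le k"
  show "antichain_le (grid a b) grid_le k A B \<longleftrightarrow>
    prod_le chain_le chain_le (chains_of_antichain A) (chains_of_antichain B)"
  proof
    assume "antichain_le (grid a b) grid_le k A B"
    then show "prod_le chain_le chain_le (chains_of_antichain A) (chains_of_antichain B)"
      by (rule chains_of_antichain_mono)
  next
    assume "prod_le chain_le chain_le (chains_of_antichain A) (chains_of_antichain B)"
    then have "antichain_le (grid a b) grid_le k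
        (antichain_of_chains (chains_of_antichain A)) (antichain_of_chains (chains_of_antichain B))"
      by (rule antichain_le_of_chains[OF chains_of_antichain_in_kchains[OF A]
            chains_of_antichain_in_kchains[OF B]])
    then show "antichain_le (grid a b) grid_le k A B"
      unfolding antichain_of_chains_of_antichain[OF A] antichain_of_chains_of_antichain[OF B] .
  qed
qed

end
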